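(* Let $\mu$ be a positive Borel measure on $\mathbb{R}^d$ with bounded support $E$, $\mu(E)=1$, and $\mu(B(x,r))\le c_0r^\alpha$ for every open ball $B(x,r)$, where $0<\alpha\le d$ and $c_0>0$. Then there exist $c_1,c_2>0$ such that for every $N$, every point distribution $\mathcal{P}_N=\{z_1,\dots,z_N\}\subset\mathbb{R}^d$ and every $M\ge c_1N^{1/\alpha}$, $$\int_{\{1\le|\xi|\le M\}}\left|\sum_{j=1}^Ne^{-2\pi i\xi\cdot z_j}-N\widehat\mu(\xi)\right|^2d\xi\ge c_2NM^d.$$
   Context: $\widehat\mu(\xi)=\int e^{-2\pi i\xi\cdot x}d\mu(x)$. *)

theory Defs
  imports "HOL-Analysis.Analysis"
begin

definition msupport :: "'a::metric_space measure \<Rightarrow> 'a set" where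
  "msupport \<mu> = {x. \<forall>r>0. emeasure \<mu> (ball x r) > 0}"

definition fourier_measure :: "'a::euclidean_space measure \<Rightarrow> 'a \<Rightarrow> complex" where
  "fourier_measure \<mu> \<xi> = (LINT x|\<mu>. cis (- 2 * pi * (\<xi> \<bullet> x)))"

end

theory Submission
  imports Defs "HOL-Probability.Characteristic_Functions"
begin

text \<open>
  Weight frequency space with the Gaussian \<open>w\<^sub>a(\<xi>) = exp (-|\<xi>|^2 / (2 a^2))\<close>, where
  \<open>a = M / (2 (d + 1))\<close>, and write \<open>F\<mu>\<close> for the Fourier transform of \<mu>. The Fourier transform
  of \<open>w\<^sub>a\<close> is a positive Gaussian kernel \<open>K\<^sub>a\<close> with \<open>K\<^sub>a(0) = (a sqrt (2 pi))^d \<ge> a^d\<close>, hence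
  \<open>\<integral> w\<^sub>a |\<Sum>\<^sub>j e(\<xi>\<cdot>z\<^sub>j)|^2 = \<Sum>\<^sub>j\<^sub>k K\<^sub>a(z\<^sub>j - z\<^sub>k) \<ge> N K\<^sub>a(0)\<close>, while the ball condition gives
  \<open>\<integral> w\<^sub>a |F\<mu>|^2 = \<integral>\<integral> K\<^sub>a(x - y) d\<mu> d\<mu> \<le> C K\<^sub>a(0) a^-\<alpha>\<close>.
  Split the first integral into three regions. On \<open>|\<xi>| < 1\<close> it is at most \<open>N^2 vol(B)\<close>.
  On the annulus \<open>1 \<le> |\<xi>| \<le> M\<close> the weight is bounded below and
  \<open>|\<Sum>\<^sub>j e(\<xi>\<cdot>z\<^sub>j)|^2 \<le> 2 |\<Sum>\<^sub>j e(\<xi>\<cdot>z\<^sub>j) - N F\<mu>|^2 + 2 N^2 |F\<mu>|^2\<close>.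
  For \<open>|\<xi>| > M\<close> we have \<open>w\<^sub>a \<le> e^-(d+1) w\<^sub>2\<^sub>a\<close>, and \<open>K\<^sub>2\<^sub>a \<le> 2^d K\<^sub>a\<close> makes that part at most
  half of the total. Once \<open>a^\<alpha> \<ge> C N\<close>, the ball and the \<open>F\<mu>\<close> terms are at most \<open>N K\<^sub>a(0) / 8\<close> each,
  which leaves \<open>N K\<^sub>a(0) / 8 \<ge> c N M^d\<close> for the annulus.
\<close>

lemma integrable_exp_minus_sq_half: "integrable lborel (\<lambda>x::real. exp (- x\<^sup>2 / 2))"
proof -
  have "integrable lborel (\<lambda>x. sqrt (2*pi) * std_normal_density x)"
    using integrable_std_normal_moment[of 0] by simp
  then show ?thesis by (simp add: std_normal_density_def)
qed

lemma gaussian_cis_integral_std: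
  "integrable lborel (\<lambda>x::real. exp (- x\<^sup>2 / 2) *\<^sub>R cis (t * x))"
  "(\<integral>x. exp (- x\<^sup>2 / 2) *\<^sub>R cis (t * x) \<partial>lborel) = complex_of_real (sqrt (2*pi) * exp (- t\<^sup>2 / 2))"
proof -
  show "integrable lborel (\<lambda>x::real. exp (- x\<^sup>2 / 2) *\<^sub>R cis (t * x))"
    by (rule Bochner_Integration.integrable_bound[OF integrable_exp_minus_sq_half])
       (auto simp: norm_cis intro!: borel_measurable_continuous_onI continuous_intros)
  have "char std_normal_distribution t = (\<integral>x. std_normal_density x *\<^sub>R iexp (t * x) \<partial>lborel)"
    unfolding char_def by (subst integral_density) (auto simp: normal_density_nonneg)
  also have "\<dots> = (\<integral>x. (1 / sqrt (2*pi)) *\<^sub>R (exp (- x\<^sup>2 / 2) *\<^sub>R cis (t * x)) \<partial>lborel)"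
    by (simp add: std_normal_density_def cis_conv_exp mult.commute)
  also have "\<dots> = (1 / sqrt (2*pi)) *\<^sub>R (\<integral>x. exp (- x\<^sup>2 / 2) *\<^sub>R cis (t * x) \<partial>lborel)"
    by (rule integral_scaleR_right)
  finally have "(\<integral>x. exp (- x\<^sup>2 / 2) *\<^sub>R cis (t * x) \<partial>lborel) = sqrt (2*pi) *\<^sub>R char std_normal_distribution t"
    by simp
  then show "(\<integral>x. exp (- x\<^sup>2 / 2) *\<^sub>R cis (t * x) \<partial>lborel) = complex_of_real (sqrt (2*pi) * exp (- t\<^sup>2 / 2))"
    by (simp add: char_std_normal_distribution scaleR_conv_of_real)
qed

lemma gaussian_cis_integral:
  fixes a t :: real
  assumes a: "a > 0"
  shows "integrable lborel (\<lambda>x::real. exp (- x\<^sup>2 / (2*a\<^sup>2)) *\<^sub>R cis (t * x))"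
    "(\<integral>x. exp (- x\<^sup>2 / (2*a\<^sup>2)) *\<^sub>R cis (t * x) \<partial>lborel)
       = complex_of_real (a * sqrt (2*pi) * exp (- a\<^sup>2 * t\<^sup>2 / 2))"
proof -
  let ?f = "\<lambda>x::real. exp (- x\<^sup>2 / (2*a\<^sup>2)) *\<^sub>R cis (t * x)"
  have scaled: "?f (0 + a * x) = exp (- x\<^sup>2 / 2) *\<^sub>R cis ((t*a) * x)" for x
    using a by (simp add: power_mult_distrib mult.assoc)
  have "integrable lborel (\<lambda>x. ?f (0 + a * x))"
    unfolding scaled by (rule gaussian_cis_integral_std)
  then show "integrable lborel ?f"
    using lborel_integrable_real_affine_iff[of a ?f 0] a by simp
  have "(\<integral>x. ?f x \<partial>lborel) = \<bar>a\<bar> *\<^sub>R (\<integral>x. ?f (0 + a * x) \<partial>lborel)"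
    by (rule lborel_integral_real_affine) (use a in simp)
  also have "\<dots> = a *\<^sub>R complex_of_real (sqrt (2*pi) * exp (- (t*a)\<^sup>2 / 2))"
    unfolding scaled gaussian_cis_integral_std using a by simp
  finally show "(\<integral>x. ?f x \<partial>lborel) = complex_of_real (a * sqrt (2*pi) * exp (- a\<^sup>2 * t\<^sup>2 / 2))"
    by (simp add: scaleR_conv_of_real power_mult_distrib mult.commute)
qed

lemma lborel_integral_prod_Basis:
  fixes f :: "'a::euclidean_space \<Rightarrow> real \<Rightarrow> complex"
  assumes int: "\<And>b. b \<in> Basis \<Longrightarrow> integrable lborel (f b)"
  shows "integrable lborel (\<lambda>x::'a. \<Prod>b\<in>Basis. f b (x \<bullet> b))"
    "(\<integral>x. (\<Prod>b\<in>Basis. f b (x \<bullet> b)) \<partial>(lborel::'a measure)) = (\<Prod>b\<in>Basis. \<integral>x. f b x \<partial>lborel)"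
proof -
  interpret P: product_sigma_finite "\<lambda>_::'a. lborel::real measure"
    by standard
  have [measurable]: "b \<in> Basis \<Longrightarrow> f b \<in> borel_measurable borel" for b
    using int[of b] by (simp add: borel_measurable_integrable)
  have m: "(\<lambda>x::'a. \<Prod>b\<in>Basis. f b (x \<bullet> b)) \<in> borel_measurable borel"
    by measurable
  have coords: "(\<lambda>y. \<Sum>b\<in>Basis. y b *\<^sub>R b) \<in> measurable (\<Pi>\<^sub>M b\<in>Basis. (lborel::real measure)) (borel::'a measure)"
    by measurable
  have prod_coords: "(\<Prod>c\<in>Basis. f c ((\<Sum>b\<in>Basis. y b *\<^sub>R b) \<bullet> c)) = (\<Prod>c\<in>Basis. f c (y c))" for y
    by (intro prod.cong refl)
       (simp add: inner_sum_left inner_Basis if_distrib[of "\<lambda>x. _ * x"] sum.delta cong: if_cong)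
  show "integrable lborel (\<lambda>x::'a. \<Prod>b\<in>Basis. f b (x \<bullet> b))"
    by (subst lborel_eq, subst integrable_distr_eq[OF coords m], unfold prod_coords)
       (rule P.product_integrable_prod, auto intro: int)
  show "(\<integral>x. (\<Prod>b\<in>Basis. f b (x \<bullet> b)) \<partial>(lborel::'a measure)) = (\<Prod>b\<in>Basis. \<integral>x. f b x \<partial>lborel)"
    by (subst lborel_eq, subst integral_distr[OF coords m], unfold prod_coords)
       (rule P.product_integral_prod, auto intro: int)
qed

lemma prod_scaleR_cis:
  "finite A \<Longrightarrow> (\<Prod>b\<in>A. r b *\<^sub>R cis (p b)) = (\<Prod>b\<in>A. r b) *\<^sub>R cis (\<Sum>b\<in>A. p b)"
  by (induction A rule: finite_induct) (auto simp: cis_mult[symmetric] algebra_simps)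

lemma sum_Basis_inner_sq: "(\<Sum>b\<in>Basis. (x \<bullet> b)\<^sup>2) = (norm (x::'a::euclidean_space))\<^sup>2"
proof -
  have "(norm x)\<^sup>2 = (\<Sum>b\<in>Basis. (x \<bullet> b) * (x \<bullet> b))"
    by (simp add: power2_norm_eq_inner euclidean_inner[of x x])
  then show ?thesis by (simp add: power2_eq_square)
qed

definition gauss_weight :: "real \<Rightarrow> 'a::real_normed_vector \<Rightarrow> real" where
  "gauss_weight a \<xi> = exp (- (norm \<xi>)\<^sup>2 / (2*a\<^sup>2))"

definition gauss_kernel :: "real \<Rightarrow> 'a::euclidean_space \<Rightarrow> real" where
  "gauss_kernel a v = (a * sqrt (2*pi)) ^ DIM('a) * exp (- a\<^sup>2 * (2*pi)\<^sup>2 * (norm v)\<^sup>2 / 2)"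

lemma gauss_weight_pos: "0 < gauss_weight a \<xi>"
  and gauss_weight_le_1: "gauss_weight a \<xi> \<le> 1"
  by (auto simp: gauss_weight_def)

lemma gauss_kernel_nonneg: "a > 0 \<Longrightarrow> 0 \<le> gauss_kernel a v"
  by (simp add: gauss_kernel_def)

lemma gauss_weight_cis_integral:
  fixes a t :: real and v :: "'a::euclidean_space"
  assumes a: "a > 0"
  shows "integrable lborel (\<lambda>\<xi>::'a. gauss_weight a \<xi> *\<^sub>R cis (t * (\<xi> \<bullet> v)))"
    "(\<integral>\<xi>. gauss_weight a \<xi> *\<^sub>R cis (t * (\<xi> \<bullet> v)) \<partial>lborel)
       = complex_of_real ((a * sqrt (2*pi)) ^ DIM('a) * exp (- a\<^sup>2 * t\<^sup>2 * (norm v)\<^sup>2 / 2))"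
proof -
  define f where "f b x = exp (- x\<^sup>2 / (2*a\<^sup>2)) *\<^sub>R cis ((t * (v \<bullet> b)) * x)" for b x
  have factor: "gauss_weight a \<xi> *\<^sub>R cis (t * (\<xi> \<bullet> v)) = (\<Prod>b\<in>Basis. f b (\<xi> \<bullet> b))" for \<xi> :: 'a
  proof -
    have "(\<Prod>b\<in>Basis. f b (\<xi> \<bullet> b))
        = (\<Prod>b\<in>Basis. exp (- (\<xi> \<bullet> b)\<^sup>2 / (2*a\<^sup>2))) *\<^sub>R cis (\<Sum>b\<in>Basis. (t * (v \<bullet> b)) * (\<xi> \<bullet> b))"
      unfolding f_def by (rule prod_scaleR_cis) simp
    also have "(\<Prod>b\<in>Basis. exp (- (\<xi> \<bullet> b)\<^sup>2 / (2*a\<^sup>2))) = exp (\<Sum>b\<in>Basis. - (\<xi> \<bullet> b)\<^sup>2 / (2*a\<^sup>2))"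
      by (simp add: exp_sum)
    also have "(\<Sum>b\<in>Basis. - (\<xi> \<bullet> b)\<^sup>2 / (2*a\<^sup>2)) = - (norm \<xi>)\<^sup>2 / (2*a\<^sup>2)"
      by (simp add: sum_divide_distrib[symmetric] sum_negf sum_Basis_inner_sq)
    also have "(\<Sum>b\<in>Basis. (t * (v \<bullet> b)) * (\<xi> \<bullet> b)) = t * (\<xi> \<bullet> v)"
      by (simp add: euclidean_inner[of \<xi> v] sum_distrib_left mult_ac)
    finally show ?thesis by (simp add: gauss_weight_def)
  qed
  have int: "b \<in> Basis \<Longrightarrow> integrable lborel (f b)" for b
    unfolding f_def using gaussian_cis_integral(1)[OF a] .
  show "integrable lborel (\<lambda>\<xi>::'a. gauss_weight a \<xi> *\<^sub>R cis (t * (\<xi> \<bullet> v)))"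
    unfolding factor by (rule lborel_integral_prod_Basis(1)[OF int])
  have "(\<integral>\<xi>. gauss_weight a \<xi> *\<^sub>R cis (t * (\<xi> \<bullet> v)) \<partial>lborel) = (\<Prod>b\<in>(Basis::'a set). \<integral>x. f b x \<partial>lborel)"
    unfolding factor by (rule lborel_integral_prod_Basis(2)[OF int])
  also have "\<dots> = (\<Prod>b\<in>(Basis::'a set). complex_of_real (a * sqrt (2*pi) * exp (- a\<^sup>2 * (t * (v \<bullet> b))\<^sup>2 / 2)))"
    unfolding f_def using gaussian_cis_integral(2)[OF a] by simp
  also have "\<dots> = complex_of_real ((\<Prod>b\<in>(Basis::'a set). a * sqrt (2*pi))
                    * exp (\<Sum>b\<in>(Basis::'a set). - a\<^sup>2 * t\<^sup>2 / 2 * (v \<bullet> b)\<^sup>2))"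
    by (simp add: prod.distrib exp_sum power_mult_distrib mult_ac)
  also have "(\<Sum>b\<in>(Basis::'a set). - a\<^sup>2 * t\<^sup>2 / 2 * (v \<bullet> b)\<^sup>2) = - a\<^sup>2 * t\<^sup>2 * (norm v)\<^sup>2 / 2"
    using sum_distrib_left[of "- a\<^sup>2 * t\<^sup>2 / 2" "\<lambda>b. (v \<bullet> b)\<^sup>2" "Basis::'a set"]
    by (simp add: sum_Basis_inner_sq)
  finally show "(\<integral>\<xi>. gauss_weight a \<xi> *\<^sub>R cis (t * (\<xi> \<bullet> v)) \<partial>lborel)
      = complex_of_real ((a * sqrt (2*pi)) ^ DIM('a) * exp (- a\<^sup>2 * t\<^sup>2 * (norm v)\<^sup>2 / 2))"
    by simp
qed

lemma gauss_weight_cos_integral: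
  fixes v :: "'a::euclidean_space"
  assumes a: "a > 0"
  shows "integrable lborel (\<lambda>\<xi>::'a. gauss_weight a \<xi> * cos (2*pi * (\<xi> \<bullet> v)))"
    "(\<integral>\<xi>. gauss_weight a \<xi> * cos (2*pi * (\<xi> \<bullet> v)) \<partial>lborel) = gauss_kernel a v"
proof -
  have Re: "gauss_weight a \<xi> * cos (2*pi * (\<xi> \<bullet> v)) = Re (gauss_weight a \<xi> *\<^sub>R cis (2*pi * (\<xi> \<bullet> v)))"
    for \<xi> :: 'a
    by simp
  show "integrable lborel (\<lambda>\<xi>::'a. gauss_weight a \<xi> * cos (2*pi * (\<xi> \<bullet> v)))"
    unfolding Re by (rule integrable_Re[OF gauss_weight_cis_integral(1)[OF a]])
  show "(\<integral>\<xi>. gauss_weight a \<xi> * cos (2*pi * (\<xi> \<bullet> v)) \<partial>lborel) = gauss_kernel a v"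
    unfolding Re integral_Re[OF gauss_weight_cis_integral(1)[OF a]] gauss_weight_cis_integral(2)[OF a]
    by (simp add: gauss_kernel_def)
qed

lemma gauss_kernel_double_le:
  fixes v :: "'a::euclidean_space"
  assumes "a > 0"
  shows "gauss_kernel (2*a) v \<le> 2 ^ DIM('a) * gauss_kernel a v"
proof -
  have "exp (- (2*a)\<^sup>2 * (2*pi)\<^sup>2 * (norm v)\<^sup>2 / 2) \<le> exp (- a\<^sup>2 * (2*pi)\<^sup>2 * (norm v)\<^sup>2 / 2)"
    by (simp add: power_mult_distrib)
  then show ?thesis
    using \<open>a > 0\<close> unfolding gauss_kernel_def power_mult_distrib mult.assoc
    by (intro mult_left_mono) auto
qed

definition exp_sum :: "(nat \<Rightarrow> 'a::euclidean_space) \<Rightarrow> nat \<Rightarrow> 'a \<Rightarrow> complex" where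
  "exp_sum z N \<xi> = (\<Sum>j<N. cis (- 2 * pi * (\<xi> \<bullet> z j)))"

lemma norm_exp_sum_le: "cmod (exp_sum z N \<xi>) \<le> real N"
proof -
  have "cmod (exp_sum z N \<xi>) \<le> (\<Sum>j<N. cmod (cis (- 2 * pi * (\<xi> \<bullet> z j))))"
    unfolding exp_sum_def by (rule norm_sum)
  then show ?thesis by simp
qed

lemma cmod_exp_sum_sq:
  "(cmod (exp_sum z N \<xi>))\<^sup>2 = (\<Sum>j<N. \<Sum>k<N. cos (2*pi * (\<xi> \<bullet> (z j - z k))))"
proof -
  let ?w = "exp_sum z N \<xi>"
  have "complex_of_real ((cmod ?w)\<^sup>2) = ?w * cnj ?w" by (rule complex_norm_square)
  also have "\<dots> = (\<Sum>j<N. \<Sum>k<N. cis (- 2 * pi * (\<xi> \<bullet> z j)) * cnj (cis (- 2 * pi * (\<xi> \<bullet> z k))))"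
    unfolding exp_sum_def
    by (simp add: sum_distrib_left sum_distrib_right cnj_sum) (subst sum.swap, rule refl)
  also have "\<dots> = (\<Sum>j<N. \<Sum>k<N. cis (- (2*pi * (\<xi> \<bullet> (z j - z k)))))"
    by (intro sum.cong refl) (simp add: cis_cnj cis_mult inner_diff_right algebra_simps)
  finally have "Re (complex_of_real ((cmod ?w)\<^sup>2)) = Re (\<Sum>j<N. \<Sum>k<N. cis (- (2*pi * (\<xi> \<bullet> (z j - z k)))))"
    by simp
  then show ?thesis by (simp add: Re_sum)
qed

lemma gauss_weight_exp_sum_integral:
  fixes z :: "nat \<Rightarrow> 'a::euclidean_space"
  assumes a: "a > 0"
  shows "integrable lborel (\<lambda>\<xi>. gauss_weight a \<xi> * (cmod (exp_sum z N \<xi>))\<^sup>2)"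
    "(\<integral>\<xi>. gauss_weight a \<xi> * (cmod (exp_sum z N \<xi>))\<^sup>2 \<partial>lborel)
       = (\<Sum>j<N. \<Sum>k<N. gauss_kernel a (z j - z k))"
proof -
  have expand: "gauss_weight a \<xi> * (cmod (exp_sum z N \<xi>))\<^sup>2
      = (\<Sum>j<N. \<Sum>k<N. gauss_weight a \<xi> * cos (2*pi * (\<xi> \<bullet> (z j - z k))))" for \<xi>
    unfolding cmod_exp_sum_sq by (simp add: sum_distrib_left)
  show "integrable lborel (\<lambda>\<xi>. gauss_weight a \<xi> * (cmod (exp_sum z N \<xi>))\<^sup>2)"
    unfolding expand by (intro Bochner_Integration.integrable_sum gauss_weight_cos_integral(1)[OF a])
  show "(\<integral>\<xi>. gauss_weight a \<xi> * (cmod (exp_sum z N \<xi>))\<^sup>2 \<partial>lborel)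
      = (\<Sum>j<N. \<Sum>k<N. gauss_kernel a (z j - z k))"
    unfolding expand
    by (simp add: Bochner_Integration.integral_sum Bochner_Integration.integrable_sum
        gauss_weight_cos_integral[OF a])
qed

lemma gauss_kernel_energy_ge:
  fixes z :: "nat \<Rightarrow> 'a::euclidean_space"
  assumes a: "a > 0"
  shows "real N * gauss_kernel a (0::'a) \<le> (\<Sum>j<N. \<Sum>k<N. gauss_kernel a (z j - z k))"
proof -
  have "real N * gauss_kernel a (0::'a) = (\<Sum>j<N. gauss_kernel a (z j - z j))" by simp
  also have "\<dots> \<le> (\<Sum>j<N. \<Sum>k<N. gauss_kernel a (z j - z k))"
    by (intro sum_mono member_le_sum gauss_kernel_nonneg a) auto
  finally show ?thesis .
qed

lemma prob_space_if_msupport_mass_1: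
  fixes \<mu> :: "'a::{metric_space, second_countable_topology} measure"
  assumes borel: "sets \<mu> = sets borel"
    and mass: "emeasure \<mu> (msupport \<mu>) = 1"
  shows "prob_space \<mu>"
proof -
  have space: "space \<mu> = UNIV" using sets_eq_imp_space_eq[OF borel] by simp
  have supp: "msupport \<mu> \<in> sets \<mu>"
    using mass emeasure_notin_sets by fastforce
  define F where "F = {B. \<exists>x r. B = ball x r \<and> r > 0 \<and> emeasure \<mu> B = 0}"
  have "\<And>S. S \<in> F \<Longrightarrow> open S" unfolding F_def by auto
  then obtain F' where F': "F' \<subseteq> F" "countable F'" "\<Union>F' = \<Union>F" by (rule Lindelof)
  have null: "\<Union>F' \<in> null_sets \<mu>"
  proof -
    have "(\<Union>B\<in>F'. id B) \<in> null_sets \<mu>"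
    proof (rule null_sets_UN'[OF F'(2)])
      fix B assume "B \<in> F'"
      then obtain x r where "B = ball x r" "emeasure \<mu> B = 0" using F'(1) F_def by auto
      then show "id B \<in> null_sets \<mu>" using borel by (auto simp: null_sets_def)
    qed
    then show ?thesis by simp
  qed
  have cover: "UNIV = msupport \<mu> \<union> \<Union>F'"
  proof -
    have "x \<in> \<Union>F" if "x \<notin> msupport \<mu>" for x
    proof -
      from that obtain r where r: "r > 0" "\<not> emeasure \<mu> (ball x r) > 0"
        unfolding msupport_def by auto
      then have "ball x r \<in> F" unfolding F_def by (auto simp: not_less)
      then show ?thesis using r(1) by (intro UnionI[of "ball x r"]) auto
    qed
    then show ?thesis using F'(3) by auto
  qed
  have "emeasure \<mu> UNIV \<le> emeasure \<mu> (msupport \<mu>) + emeasure \<mu> (\<Union>F')"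
    by (subst cover, rule emeasure_subadditive) (use supp null in auto)
  also have "\<dots> = 1" using mass null by (simp add: null_sets_def)
  finally have "emeasure \<mu> UNIV \<le> 1" .
  moreover have "emeasure \<mu> (msupport \<mu>) \<le> emeasure \<mu> UNIV"
    using sets.top[of \<mu>] space by (intro emeasure_mono) auto
  ultimately show ?thesis
    using mass space by (intro prob_spaceI) simp
qed

lemma norm_fourier_measure_le:
  assumes "prob_space \<mu>"
  shows "cmod (fourier_measure \<mu> \<xi>) \<le> 1"
proof -
  interpret \<mu>: prob_space \<mu> by fact
  have "cmod (fourier_measure \<mu> \<xi>) \<le> (\<integral>x. norm (cis (- 2 * pi * (\<xi> \<bullet> x))) \<partial>\<mu>)"
    unfolding fourier_measure_def by (rule integral_norm_bound)
  also have "\<dots> = 1" by (simp add: \<mu>.prob_space)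
  finally show ?thesis .
qed

lemma sets_pair_measure_borel:
  fixes \<mu> :: "'a::second_countable_topology measure" and \<nu> :: "'b::second_countable_topology measure"
  assumes "sets \<mu> = sets borel" "sets \<nu> = sets borel"
  shows "sets (\<mu> \<Otimes>\<^sub>M \<nu>) = sets (borel :: ('a \<times> 'b) measure)"
  using sets_pair_measure_cong[OF assms] borel_prod[where 'a='a and 'b='b] by metis

lemma borel_measurable_fourier_measure:
  fixes \<mu> :: "'a::euclidean_space measure"
  assumes borel: "sets \<mu> = sets borel" and "prob_space \<mu>"
  shows "fourier_measure \<mu> \<in> borel_measurable borel"
proof -
  interpret \<mu>: prob_space \<mu> by fact
  have "(\<lambda>(\<xi>::'a, x::'a). cis (- 2 * pi * (\<xi> \<bullet> x))) \<in> borel_measurable ((borel::'a measure) \<Otimes>\<^sub>M \<mu>)"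
    by (subst measurable_cong_sets[OF sets_pair_measure_borel[OF refl borel] refl])
       (auto intro!: borel_measurable_continuous_onI continuous_intros simp: split_beta)
  then show ?thesis
    unfolding fourier_measure_def[abs_def] by (rule \<mu>.borel_measurable_lebesgue_integral)
qed

lemma cmod_fourier_measure_sq:
  fixes \<mu> :: "'a::euclidean_space measure"
  assumes borel: "sets \<mu> = sets borel" and "prob_space \<mu>"
  shows "(cmod (fourier_measure \<mu> \<xi>))\<^sup>2 = (\<integral>p. cos (2*pi * (\<xi> \<bullet> (fst p - snd p))) \<partial>(\<mu> \<Otimes>\<^sub>M \<mu>))"
proof -
  interpret \<mu>: prob_space \<mu> by fact
  interpret PP: pair_prob_space \<mu> \<mu> by unfold_locales
  define f where "f x = cis (- 2 * pi * (\<xi> \<bullet> x))" for x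
  have meas: "(\<lambda>p. f (fst p) * cnj (f (snd p))) \<in> borel_measurable (\<mu> \<Otimes>\<^sub>M \<mu>)"
    unfolding measurable_cong_sets[OF sets_pair_measure_borel[OF borel borel] refl] f_def
    by (intro borel_measurable_continuous_onI continuous_intros)
  have int: "integrable (\<mu> \<Otimes>\<^sub>M \<mu>) (\<lambda>p. f (fst p) * cnj (f (snd p)))"
    using meas by (intro PP.P.integrable_const_bound[where B=1]) (auto simp: f_def norm_mult)
  have "complex_of_real ((cmod (fourier_measure \<mu> \<xi>))\<^sup>2) = fourier_measure \<mu> \<xi> * cnj (fourier_measure \<mu> \<xi>)"
    by (rule complex_norm_square)
  also have "\<dots> = (\<integral>x. (\<integral>y. f x * cnj (f y) \<partial>\<mu>) \<partial>\<mu>)"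
    by (simp add: fourier_measure_def f_def)
  also have "\<dots> = (\<integral>p. f (fst p) * cnj (f (snd p)) \<partial>(\<mu> \<Otimes>\<^sub>M \<mu>))"
    using PP.integral_fst'[OF int] by simp
  finally have "(cmod (fourier_measure \<mu> \<xi>))\<^sup>2 = Re (\<integral>p. f (fst p) * cnj (f (snd p)) \<partial>(\<mu> \<Otimes>\<^sub>M \<mu>))"
    by (metis Re_complex_of_real)
  also have "\<dots> = (\<integral>p. Re (f (fst p) * cnj (f (snd p))) \<partial>(\<mu> \<Otimes>\<^sub>M \<mu>))"
    by (rule integral_Re[OF int, symmetric])
  also have "\<dots> = (\<integral>p. cos (2*pi * (\<xi> \<bullet> (fst p - snd p))) \<partial>(\<mu> \<Otimes>\<^sub>M \<mu>))"
    by (intro Bochner_Integration.integral_cong refl)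
       (simp add: f_def cis_cnj cis_mult inner_diff_right algebra_simps, metis cos_minus minus_diff_eq)
  finally show ?thesis .
qed

lemma gauss_weight_fourier_integral:
  fixes \<mu> :: "'a::euclidean_space measure"
  assumes borel: "sets \<mu> = sets borel" and prob: "prob_space \<mu>" and a: "a > 0"
  shows "integrable lborel (\<lambda>\<xi>. gauss_weight a \<xi> * (cmod (fourier_measure \<mu> \<xi>))\<^sup>2)"
    "(\<integral>\<xi>. gauss_weight a \<xi> * (cmod (fourier_measure \<mu> \<xi>))\<^sup>2 \<partial>lborel)
       = (\<integral>p. gauss_kernel a (fst p - snd p) \<partial>(\<mu> \<Otimes>\<^sub>M \<mu>))"
proof -
  interpret \<mu>: prob_space \<mu> by (rule prob)
  interpret PP: pair_prob_space \<mu> \<mu> by unfold_locales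
  let ?P = "\<mu> \<Otimes>\<^sub>M \<mu>"
  interpret LP: pair_sigma_finite lborel ?P by unfold_locales
  have sets_LP: "sets ((lborel::'a measure) \<Otimes>\<^sub>M ?P) = sets (borel :: ('a \<times> ('a \<times> 'a)) measure)"
    using sets_pair_measure_cong[OF sets_lborel sets_pair_measure_borel[OF borel borel]]
      borel_prod[where 'a='a and 'b="'a \<times> 'a"]
    by metis
  have meas_LP: "f \<in> borel_measurable ((lborel::'a measure) \<Otimes>\<^sub>M ?P)"
    if "continuous_on UNIV f" for f :: "'a \<times> ('a \<times> 'a) \<Rightarrow> real"
    by (subst measurable_cong_sets[OF sets_LP refl]) (rule borel_measurable_continuous_onI[OF that])
  define c where "c \<xi> p = cos (2*pi * (\<xi> \<bullet> (fst p - snd p)))" for \<xi> :: 'a and p :: "'a \<times> 'a"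
  have dom: "integrable ((lborel::'a measure) \<Otimes>\<^sub>M ?P) (\<lambda>(\<xi>, p). gauss_weight a \<xi>)"
  proof (rule LP.Fubini_integrable)
    show "(\<lambda>(\<xi>, p). gauss_weight a \<xi>) \<in> borel_measurable ((lborel::'a measure) \<Otimes>\<^sub>M ?P)"
      unfolding gauss_weight_def by (rule meas_LP) (use a in \<open>auto intro!: continuous_intros simp: split_beta\<close>)
    show "integrable lborel (\<lambda>\<xi>::'a. \<integral>p. norm ((\<lambda>(\<xi>, p). gauss_weight a \<xi>) (\<xi>, p)) \<partial>?P)"
      using gauss_weight_cos_integral(1)[OF a, of 0] a
      by (simp add: PP.P.prob_space abs_of_pos gauss_weight_pos)
  qed simp
  have int: "integrable ((lborel::'a measure) \<Otimes>\<^sub>M ?P) (\<lambda>(\<xi>, p). gauss_weight a \<xi> * c \<xi> p)"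
  proof (rule Bochner_Integration.integrable_bound[OF dom])
    show "(\<lambda>(\<xi>, p). gauss_weight a \<xi> * c \<xi> p) \<in> borel_measurable ((lborel::'a measure) \<Otimes>\<^sub>M ?P)"
      unfolding gauss_weight_def c_def by (rule meas_LP) (use a in \<open>auto intro!: continuous_intros simp: split_beta\<close>)
  qed (auto simp: c_def abs_mult gauss_weight_def intro!: mult_left_le)
  have fubini_form: "gauss_weight a \<xi> * (cmod (fourier_measure \<mu> \<xi>))\<^sup>2 = (\<integral>p. gauss_weight a \<xi> * c \<xi> p \<partial>?P)"
    for \<xi>
    by (simp add: cmod_fourier_measure_sq[OF borel prob] c_def)
  show "integrable lborel (\<lambda>\<xi>. gauss_weight a \<xi> * (cmod (fourier_measure \<mu> \<xi>))\<^sup>2)"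
    unfolding fubini_form using LP.integrable_fst[OF int] .
  have "(\<integral>\<xi>. gauss_weight a \<xi> * (cmod (fourier_measure \<mu> \<xi>))\<^sup>2 \<partial>lborel)
      = (\<integral>p. (\<integral>\<xi>. gauss_weight a \<xi> * c \<xi> p \<partial>lborel) \<partial>?P)"
    unfolding fubini_form using LP.Fubini_integral[OF int] by simp
  also have "\<dots> = (\<integral>p. gauss_kernel a (fst p - snd p) \<partial>?P)"
    by (intro Bochner_Integration.integral_cong refl) (simp add: c_def gauss_weight_cos_integral[OF a])
  finally show "(\<integral>\<xi>. gauss_weight a \<xi> * (cmod (fourier_measure \<mu> \<xi>))\<^sup>2 \<partial>lborel)
      = (\<integral>p. gauss_kernel a (fst p - snd p) \<partial>?P)" .
qed

definition shell_weight :: "nat \<Rightarrow> nat \<Rightarrow> real" where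
  "shell_weight n k = exp (- (real k)\<^sup>2) * (real k + 1) ^ n"

lemma shell_weight_nonneg: "0 \<le> shell_weight n k"
  by (simp add: shell_weight_def)

lemma summable_shell_weight: "summable (shell_weight n)"
proof (rule summable_comparison_test[of _ "\<lambda>k. exp ((real n + 1)\<^sup>2) * exp (-1) ^ k"])
  show "summable (\<lambda>k. exp ((real n + 1)\<^sup>2) * exp (-1) ^ k)"
    by (intro summable_mult summable_geometric) auto
  show "\<exists>N. \<forall>k\<ge>N. norm (shell_weight n k) \<le> exp ((real n + 1)\<^sup>2) * exp (- 1) ^ k"
  proof (intro exI allI impI)
    fix k :: nat
    have "(real k + 1) ^ n \<le> exp (real k) ^ n"
      by (intro power_mono) (auto simp: add.commute[of _ 1] exp_ge_add_one_self)
    also have "\<dots> = exp (real n * real k)" by (simp add: exp_of_nat_mult[symmetric])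
    finally have "shell_weight n k \<le> exp (- (real k)\<^sup>2) * exp (real n * real k)"
      unfolding shell_weight_def by (intro mult_left_mono) auto
    also have "\<dots> = exp (real n * real k - (real k)\<^sup>2)" by (simp add: exp_add[symmetric])
    also have "\<dots> \<le> exp ((real n + 1)\<^sup>2 - real k)"
    proof -
      have "(real n + 1)\<^sup>2 - real k - (real n * real k - (real k)\<^sup>2)
          = (real k - (real n + 1) / 2)\<^sup>2 + 3 * (real n + 1)\<^sup>2 / 4"
        by (simp add: power2_eq_square field_simps)
      moreover have "0 \<le> (real k - (real n + 1) / 2)\<^sup>2 + 3 * (real n + 1)\<^sup>2 / 4" by simp
      ultimately have "real n * real k - (real k)\<^sup>2 \<le> (real n + 1)\<^sup>2 - real k" by linarith
      then show ?thesis by simp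
    qed
    also have "\<dots> = exp ((real n + 1)\<^sup>2) * exp (- 1) ^ k"
      by (simp add: exp_diff exp_minus exp_of_nat_mult[symmetric] field_simps power_divide)
    finally show "norm (shell_weight n k) \<le> exp ((real n + 1)\<^sup>2) * exp (- 1) ^ k"
      using shell_weight_nonneg[of n k] by simp
  qed
qed

lemma ennreal_le_suminf: "(f k :: ennreal) \<le> suminf f"
  using sum_le_suminf[OF summableI, of "{k}" f] by simp

lemma shell_ball_bound_le:
  fixes \<alpha> b c0 :: real
  assumes alpha: "0 < \<alpha>" "\<alpha> \<le> real n" and b: "b > 0" and c0: "c0 > 0"
  shows "exp (- (real k)\<^sup>2) * (c0 * ((real k + 1) / b) powr \<alpha>) \<le> c0 / b powr \<alpha> * shell_weight n k"
proof -
  have "((real k + 1) / b) powr \<alpha> = (real k + 1) powr \<alpha> / b powr \<alpha>"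
    using b by (simp add: powr_divide)
  also have "(real k + 1) powr \<alpha> \<le> (real k + 1) powr (real n)"
    using alpha by (intro powr_mono) auto
  also have "\<dots> = (real k + 1) ^ n" by (simp add: powr_realpow)
  finally have "((real k + 1) / b) powr \<alpha> \<le> (real k + 1) ^ n / b powr \<alpha>"
    using b by (simp add: divide_right_mono)
  then have "(c0 * exp (- (real k)\<^sup>2)) * ((real k + 1) / b) powr \<alpha>
      \<le> (c0 * exp (- (real k)\<^sup>2)) * ((real k + 1) ^ n / b powr \<alpha>)"
    using c0 by (intro mult_left_mono) auto
  then show ?thesis
    unfolding shell_weight_def by (simp add: mult_ac)
qed

text \<open>Decompose into the shells \<open>k \<le> b |x - y| < k + 1\<close> and apply the ball condition to each.\<close>

lemma nn_integral_gauss_le_ball_bound: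
  fixes \<mu> :: "'a::metric_space measure" and \<alpha> c0 b :: real and n :: nat
  assumes borel: "sets \<mu> = sets borel"
    and alpha: "0 < \<alpha>" "\<alpha> \<le> real n"
    and ball_bound: "\<And>x r. r > 0 \<Longrightarrow> emeasure \<mu> (ball x r) \<le> ennreal (c0 * r powr \<alpha>)"
    and b: "b > 0" and c0: "c0 > 0"
  shows "(\<integral>\<^sup>+y. ennreal (exp (- (b * dist x y)\<^sup>2)) \<partial>\<mu>) \<le> ennreal (c0 / b powr \<alpha> * suminf (shell_weight n))"
proof -
  let ?shell = "\<lambda>k y. ennreal (exp (- (real k)\<^sup>2)) * indicator (ball x ((real k + 1) / b)) y"
  have pointwise: "ennreal (exp (- (b * dist x y)\<^sup>2)) \<le> (\<Sum>k. ?shell k y)" for y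
  proof -
    define k where "k = nat \<lfloor>b * dist x y\<rfloor>"
    have k: "real k \<le> b * dist x y" "b * dist x y < real k + 1"
      unfolding k_def using b by (simp_all add: of_nat_nat)
    then have "y \<in> ball x ((real k + 1) / b)" using b by (simp add: field_simps mult.commute)
    moreover have "exp (- (b * dist x y)\<^sup>2) \<le> exp (- (real k)\<^sup>2)"
      using k by (simp add: power_mono)
    ultimately have "ennreal (exp (- (b * dist x y)\<^sup>2)) \<le> ?shell k y"
      by (simp add: ennreal_leI)
    also have "\<dots> \<le> (\<Sum>k. ?shell k y)"
      by (rule ennreal_le_suminf)
    finally show ?thesis .
  qed
  have shell_le: "ennreal (exp (- (real k)\<^sup>2)) * emeasure \<mu> (ball x ((real k + 1) / b))
      \<le> ennreal (c0 / b powr \<alpha> * shell_weight n k)" for k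
  proof -
    have "ennreal (exp (- (real k)\<^sup>2)) * emeasure \<mu> (ball x ((real k + 1) / b))
        \<le> ennreal (exp (- (real k)\<^sup>2)) * ennreal (c0 * ((real k + 1) / b) powr \<alpha>)"
      using b by (intro mult_left_mono ball_bound) auto
    also have "\<dots> \<le> ennreal (c0 / b powr \<alpha> * shell_weight n k)"
      using shell_ball_bound_le[OF alpha b c0, of k] c0 by (simp add: ennreal_mult[symmetric] ennreal_leI)
    finally show ?thesis .
  qed
  have "(\<integral>\<^sup>+y. ennreal (exp (- (b * dist x y)\<^sup>2)) \<partial>\<mu>) \<le> (\<integral>\<^sup>+y. (\<Sum>k. ?shell k y) \<partial>\<mu>)"
    by (intro nn_integral_mono pointwise)
  also have "\<dots> = (\<Sum>k. \<integral>\<^sup>+y. ?shell k y \<partial>\<mu>)"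
    by (rule nn_integral_suminf) (intro borel_measurable_times_ennreal borel_measurable_const borel_measurable_indicator,
        simp add: borel borel_open)
  also have "\<dots> = (\<Sum>k. ennreal (exp (- (real k)\<^sup>2)) * emeasure \<mu> (ball x ((real k + 1) / b)))"
    by (intro suminf_cong nn_integral_cmult_indicator) (use borel in auto)
  also have "\<dots> \<le> (\<Sum>k. ennreal (c0 / b powr \<alpha> * shell_weight n k))"
    by (intro suminf_le summableI shell_le)
  also have "\<dots> = ennreal (c0 / b powr \<alpha> * suminf (shell_weight n))"
    by (rule suminf_ennreal_eq[OF _ sums_mult[OF summable_sums[OF summable_shell_weight]]])
       (use c0 b shell_weight_nonneg in auto)
  finally show ?thesis .
qed

lemma nn_integral_gauss_kernel_le:
  fixes \<mu> :: "'a::euclidean_space measure" and a \<alpha> c0 :: real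
  assumes borel: "sets \<mu> = sets borel" and a: "a > 0"
    and alpha: "0 < \<alpha>" "\<alpha> \<le> real DIM('a)"
    and ball_bound: "\<And>x r. r > 0 \<Longrightarrow> emeasure \<mu> (ball x r) \<le> ennreal (c0 * r powr \<alpha>)"
    and c0: "c0 > 0"
  shows "(\<integral>\<^sup>+y. ennreal (gauss_kernel a (x - y)) \<partial>\<mu>)
           \<le> ennreal (gauss_kernel a (0::'a) * (c0 / a powr \<alpha> * suminf (shell_weight DIM('a))))"
proof -
  let ?K0 = "gauss_kernel a (0::'a)" and ?b = "sqrt 2 * pi * a"
  let ?B = "c0 / a powr \<alpha> * suminf (shell_weight DIM('a))"
  have K0: "?K0 > 0" using a by (simp add: gauss_kernel_def)
  have B: "0 \<le> ?B"
    using c0 a by (auto intro!: mult_nonneg_nonneg divide_nonneg_nonneg suminf_nonneg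
        summable_shell_weight shell_weight_nonneg)
  have "gauss_kernel a (x - y) = ?K0 * exp (- (?b * dist x y)\<^sup>2)" for y :: 'a
    by (simp add: gauss_kernel_def dist_norm power_mult_distrib)
  then have "(\<integral>\<^sup>+y. ennreal (gauss_kernel a (x - y)) \<partial>\<mu>)
      = ennreal ?K0 * (\<integral>\<^sup>+y. ennreal (exp (- (?b * dist x y)\<^sup>2)) \<partial>\<mu>)"
    using K0
    by (subst nn_integral_cmult[symmetric])
       (auto simp: ennreal_mult measurable_cong_sets[OF borel refl] intro!: nn_integral_cong
         borel_measurable_continuous_onI continuous_intros measurable_compose[OF _ measurable_ennreal])
  also have "\<dots> \<le> ennreal ?K0 * ennreal (c0 / ?b powr \<alpha> * suminf (shell_weight DIM('a)))"
    using a by (intro mult_left_mono nn_integral_gauss_le_ball_bound[OF borel alpha ball_bound _ c0]) auto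
  also have "\<dots> \<le> ennreal ?K0 * ennreal ?B"
  proof -
    have "a \<le> ?b"
      using a pi_gt3 mult_mono[of 1 "sqrt 2" 1 pi] by (simp add: mult_le_cancel_right1)
    then have "a powr \<alpha> \<le> ?b powr \<alpha>"
      using alpha a by (intro powr_mono2) auto
    then show ?thesis
      using c0 a by (intro mult_left_mono ennreal_leI mult_right_mono divide_left_mono
          suminf_nonneg summable_shell_weight shell_weight_nonneg) auto
  qed
  also have "\<dots> = ennreal (?K0 * ?B)"
    using K0 B by (rule ennreal_mult[symmetric, OF less_imp_le])
  finally show ?thesis .
qed

lemma gauss_kernel_energy_le:
  fixes \<mu> :: "'a::euclidean_space measure" and a \<alpha> c0 :: real
  assumes borel: "sets \<mu> = sets borel" and prob: "prob_space \<mu>" and a: "a > 0"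
    and alpha: "0 < \<alpha>" "\<alpha> \<le> real DIM('a)"
    and ball_bound: "\<And>x r. r > 0 \<Longrightarrow> emeasure \<mu> (ball x r) \<le> ennreal (c0 * r powr \<alpha>)"
    and c0: "c0 > 0"
  shows "(\<integral>p. gauss_kernel a (fst p - snd p) \<partial>(\<mu> \<Otimes>\<^sub>M \<mu>))
           \<le> gauss_kernel a (0::'a) * (c0 / a powr \<alpha> * suminf (shell_weight DIM('a)))"
    (is "_ \<le> ?bound")
proof -
  interpret \<mu>: prob_space \<mu> by (rule prob)
  interpret PP: pair_prob_space \<mu> \<mu> by unfold_locales
  have bound: "0 \<le> ?bound"
    using a c0 by (intro mult_nonneg_nonneg divide_nonneg_nonneg gauss_kernel_nonneg suminf_nonneg
        summable_shell_weight shell_weight_nonneg) auto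
  have meas: "(\<lambda>p. gauss_kernel a (fst p - snd p)) \<in> borel_measurable (\<mu> \<Otimes>\<^sub>M \<mu>)"
    unfolding measurable_cong_sets[OF sets_pair_measure_borel[OF borel borel] refl] gauss_kernel_def
    by (intro borel_measurable_continuous_onI continuous_intros) auto
  have "(\<integral>\<^sup>+p. ennreal (gauss_kernel a (fst p - snd p)) \<partial>(\<mu> \<Otimes>\<^sub>M \<mu>))
      = (\<integral>\<^sup>+x. \<integral>\<^sup>+y. ennreal (gauss_kernel a (x - y)) \<partial>\<mu> \<partial>\<mu>)"
    using meas by (subst \<mu>.nn_integral_fst[symmetric]) (auto intro: measurable_compose[OF _ measurable_ennreal])
  also have "\<dots> \<le> (\<integral>\<^sup>+x. ennreal ?bound \<partial>\<mu>)"
    by (intro nn_integral_mono nn_integral_gauss_kernel_le[OF borel a alpha ball_bound c0])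
  also have "\<dots> = ennreal ?bound"
    by (simp add: \<mu>.emeasure_space_1)
  finally have nn_le: "(\<integral>\<^sup>+p. ennreal (gauss_kernel a (fst p - snd p)) \<partial>(\<mu> \<Otimes>\<^sub>M \<mu>)) \<le> ennreal ?bound" .
  have "(\<integral>p. gauss_kernel a (fst p - snd p) \<partial>(\<mu> \<Otimes>\<^sub>M \<mu>))
      = enn2real (\<integral>\<^sup>+p. ennreal (gauss_kernel a (fst p - snd p)) \<partial>(\<mu> \<Otimes>\<^sub>M \<mu>))"
    using meas a by (intro integral_eq_nn_integral) (auto intro: gauss_kernel_nonneg)
  also have "\<dots> \<le> ?bound"
    by (rule enn2real_leI[OF bound nn_le])
  finally show ?thesis .
qed

lemma gauss_weight_ge_if_norm_le:
  assumes a: "a > 0" and le: "norm \<xi> \<le> 2 * K * a"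
  shows "exp (- 2 * K\<^sup>2) \<le> gauss_weight a \<xi>"
proof -
  have "(norm \<xi>)\<^sup>2 \<le> (2 * K * a)\<^sup>2" using le by (intro power_mono) auto
  then have "(norm \<xi>)\<^sup>2 / (2 * a\<^sup>2) \<le> 2 * K\<^sup>2" using a by (simp add: field_simps power_mult_distrib)
  then show ?thesis by (simp add: gauss_weight_def)
qed

lemma gauss_weight_le_if_norm_ge:
  assumes a: "a > 0" and K: "1 \<le> K" and ge: "2 * K * a \<le> norm \<xi>"
  shows "gauss_weight a \<xi> \<le> exp (- K) * gauss_weight (2 * a) \<xi>"
proof -
  define u where "u = (norm \<xi>)\<^sup>2 / a\<^sup>2"
  have "(2 * K * a)\<^sup>2 \<le> (norm \<xi>)\<^sup>2" using ge K a by (intro power_mono) auto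
  then have "4 * K\<^sup>2 \<le> u" unfolding u_def using a by (simp add: field_simps power_mult_distrib)
  moreover have "K \<le> K\<^sup>2" using K by (simp add: power2_eq_square)
  ultimately have "- (u / 2) \<le> - K + - (u / 8)" using K by linarith
  moreover have "gauss_weight a \<xi> = exp (- (u / 2))" "gauss_weight (2 * a) \<xi> = exp (- (u / 8))"
    unfolding gauss_weight_def u_def using a by (simp_all add: field_simps power_mult_distrib)
  ultimately show ?thesis by (simp add: exp_add[symmetric])
qed

lemma gauss_weight_norm_sq_split:
  fixes \<xi> :: "'a::real_normed_vector" and g h :: complex and a K n :: real
  assumes a: "a > 0" and K: "K \<ge> 1" and g: "cmod g \<le> n"
  shows "gauss_weight a \<xi> * (cmod g)\<^sup>2
      \<le> 2 * (indicator {\<xi>. 1 \<le> norm \<xi> \<and> norm \<xi> \<le> 2 * K * a} \<xi> * (cmod (g - of_real n * h))\<^sup>2)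
        + 2 * n\<^sup>2 * exp (2 * K\<^sup>2) * (gauss_weight a \<xi> * (cmod h)\<^sup>2)
        + n\<^sup>2 * indicator (ball 0 1) \<xi>
        + exp (- K) * (gauss_weight (2 * a) \<xi> * (cmod g)\<^sup>2)"
proof -
  let ?F = "(cmod (g - of_real n * h))\<^sup>2" and ?H = "gauss_weight a \<xi> * (cmod h)\<^sup>2"
  have w: "0 < gauss_weight a \<xi>" "0 < gauss_weight (2 * a) \<xi>"
    by (simp_all add: gauss_weight_pos)
  have terms_nonneg: "0 \<le> 2 * (indicator {\<xi>. 1 \<le> norm \<xi> \<and> norm \<xi> \<le> 2 * K * a} \<xi> * ?F)"
    "0 \<le> 2 * n\<^sup>2 * exp (2 * K\<^sup>2) * ?H" "0 \<le> n\<^sup>2 * indicator (ball 0 1) \<xi>"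
    "0 \<le> exp (- K) * (gauss_weight (2 * a) \<xi> * (cmod g)\<^sup>2)"
    using w by simp_all
  have weight_le: "gauss_weight a \<xi> * (cmod g)\<^sup>2 \<le> (cmod g)\<^sup>2"
    using gauss_weight_le_1[of a \<xi>] by (simp add: mult_left_le_one_le w(1) less_imp_le)
  consider "norm \<xi> < 1" | "1 \<le> norm \<xi>" "norm \<xi> \<le> 2 * K * a" | "2 * K * a \<le> norm \<xi>"
    by linarith
  then show ?thesis
  proof cases
    case 1
    have "(cmod g)\<^sup>2 \<le> n\<^sup>2" using g by (intro power_mono) auto
    with 1 weight_le have "gauss_weight a \<xi> * (cmod g)\<^sup>2 \<le> n\<^sup>2 * indicator (ball 0 1) \<xi>"
      by simp
    with terms_nonneg show ?thesis by linarith
  next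
    case 2
    have "cmod g \<le> cmod (g - of_real n * h) + \<bar>n\<bar> * cmod h"
      using norm_triangle_ineq[of "g - of_real n * h" "of_real n * h"] by (simp add: norm_mult)
    then have "(cmod g)\<^sup>2 \<le> (cmod (g - of_real n * h) + \<bar>n\<bar> * cmod h)\<^sup>2"
      by (intro power_mono) auto
    also have "\<dots> \<le> 2 * ?F + 2 * n\<^sup>2 * (cmod h)\<^sup>2"
      using sum_squares_bound[of "cmod (g - of_real n * h)" "\<bar>n\<bar> * cmod h"]
      by (simp add: power2_eq_square algebra_simps)
    also have "(cmod h)\<^sup>2 \<le> exp (2 * K\<^sup>2) * ?H"
      using gauss_weight_ge_if_norm_le[OF a 2(2)] mult_right_mono[of 1 "exp (2 * K\<^sup>2) * gauss_weight a \<xi>" "(cmod h)\<^sup>2"]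
      by (simp add: exp_minus field_simps)
    finally show ?thesis
      using 2 weight_le terms_nonneg by (simp add: mult_left_mono mult.assoc)
  next
    case 3
    then have "gauss_weight a \<xi> * (cmod g)\<^sup>2 \<le> (exp (- K) * gauss_weight (2 * a) \<xi>) * (cmod g)\<^sup>2"
      using gauss_weight_le_if_norm_ge[OF a K] by (intro mult_right_mono) auto
    then have "gauss_weight a \<xi> * (cmod g)\<^sup>2 \<le> exp (- K) * (gauss_weight (2 * a) \<xi> * (cmod g)\<^sup>2)"
      by (simp only: mult.assoc)
    with terms_nonneg show ?thesis by linarith
  qed
qed

lemma norm_exp_sum_sub_fourier_le:
  assumes "prob_space \<mu>"
  shows "cmod (exp_sum z N \<xi> - of_nat N * fourier_measure \<mu> \<xi>) \<le> 2 * real N"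
  using norm_triangle_ineq4[of "exp_sum z N \<xi>" "of_nat N * fourier_measure \<mu> \<xi>"]
    norm_exp_sum_le[of z N \<xi>] norm_fourier_measure_le[OF assms, of \<xi>]
    mult_left_le[of "cmod (fourier_measure \<mu> \<xi>)" "real N"]
  by (simp add: norm_mult)

lemma integrable_annulus_exp_sum_sub_fourier:
  fixes \<mu> :: "'a::euclidean_space measure"
  assumes borel: "sets \<mu> = sets borel" and prob: "prob_space \<mu>"
  shows "integrable lborel (\<lambda>\<xi>. indicator {\<xi>::'a. 1 \<le> norm \<xi> \<and> norm \<xi> \<le> R} \<xi>
           * (cmod (exp_sum z N \<xi> - of_nat N * fourier_measure \<mu> \<xi>))\<^sup>2)"
proof (rule Bochner_Integration.integrable_bound)
  have [measurable]: "fourier_measure \<mu> \<in> borel_measurable borel"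
    by (rule borel_measurable_fourier_measure[OF borel prob])
  have [measurable]: "exp_sum z N \<in> borel_measurable borel"
    unfolding exp_sum_def[abs_def] by (intro borel_measurable_continuous_onI continuous_intros)
  show "(\<lambda>\<xi>. indicator {\<xi>::'a. 1 \<le> norm \<xi> \<and> norm \<xi> \<le> R} \<xi>
      * (cmod (exp_sum z N \<xi> - of_nat N * fourier_measure \<mu> \<xi>))\<^sup>2) \<in> borel_measurable lborel"
    by measurable
  show "integrable lborel (\<lambda>\<xi>. (2 * real N)\<^sup>2 * indicator (cball (0::'a) R) \<xi>)"
    using emeasure_bounded_finite[of "cball (0::'a) R"]
    by (intro integrable_mult_right) (simp add: integrable_indicator_iff)
  have "(cmod (exp_sum z N \<xi> - of_nat N * fourier_measure \<mu> \<xi>))\<^sup>2 \<le> (2 * real N)\<^sup>2" for \<xi>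
    by (intro power_mono norm_exp_sum_sub_fourier_le[OF prob]) simp
  then show "AE \<xi> in lborel. norm (indicator {\<xi>::'a. 1 \<le> norm \<xi> \<and> norm \<xi> \<le> R} \<xi>
        * (cmod (exp_sum z N \<xi> - of_nat N * fourier_measure \<mu> \<xi>))\<^sup>2)
      \<le> norm ((2 * real N)\<^sup>2 * indicator (cball (0::'a) R) \<xi>)"
    by (auto simp: indicator_def)
qed

lemma gauss_energy_split:
  fixes \<mu> :: "'a::euclidean_space measure" and z :: "nat \<Rightarrow> 'a" and a K :: real
  assumes borel: "sets \<mu> = sets borel" and prob: "prob_space \<mu>" and a: "a > 0" and K: "K \<ge> 1"
  shows "(\<Sum>j<N. \<Sum>k<N. gauss_kernel a (z j - z k))
      \<le> 2 * (LINT \<xi>:{\<xi>. 1 \<le> norm \<xi> \<and> norm \<xi> \<le> 2 * K * a}|lborel.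
                (cmod (exp_sum z N \<xi> - of_nat N * fourier_measure \<mu> \<xi>))\<^sup>2)
        + 2 * (real N)\<^sup>2 * exp (2 * K\<^sup>2) * (\<integral>p. gauss_kernel a (fst p - snd p) \<partial>(\<mu> \<Otimes>\<^sub>M \<mu>))
        + (real N)\<^sup>2 * measure lborel (ball (0::'a) 1)
        + exp (- K) * (\<Sum>j<N. \<Sum>k<N. gauss_kernel (2 * a) (z j - z k))"
proof -
  define F where "F \<xi> = indicator {\<xi>::'a. 1 \<le> norm \<xi> \<and> norm \<xi> \<le> 2 * K * a} \<xi>
    * (cmod (exp_sum z N \<xi> - of_nat N * fourier_measure \<mu> \<xi>))\<^sup>2" for \<xi>
  define H where "H \<xi> = gauss_weight a \<xi> * (cmod (fourier_measure \<mu> \<xi>))\<^sup>2" for \<xi>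
  define G where "G b \<xi> = gauss_weight b \<xi> * (cmod (exp_sum z N \<xi>))\<^sup>2" for b \<xi>
  define B where "B = ball (0::'a) 1"
  have "2 * a > 0" using a by simp
  have int_F: "integrable lborel F"
    unfolding F_def by (rule integrable_annulus_exp_sum_sub_fourier[OF borel prob])
  have int_H: "integrable lborel H"
    unfolding H_def by (rule gauss_weight_fourier_integral(1)[OF borel prob a])
  have int_B: "integrable lborel (indicator B :: 'a \<Rightarrow> real)"
    unfolding B_def using emeasure_bounded_finite[of "ball (0::'a) 1"]
    by (simp add: integrable_indicator_iff)
  have int_G: "integrable lborel (G b)" if "b > 0" for b
    unfolding G_def by (rule gauss_weight_exp_sum_integral(1)[OF that])
  have pointwise: "G a \<xi> \<le> 2 * F \<xi> + 2 * (real N)\<^sup>2 * exp (2 * K\<^sup>2) * H \<xi> + (real N)\<^sup>2 * indicator B \<xi>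
      + exp (- K) * G (2 * a) \<xi>" for \<xi>
    using gauss_weight_norm_sq_split[OF a K norm_exp_sum_le, where \<xi>=\<xi> and h="fourier_measure \<mu> \<xi>"]
    unfolding F_def G_def H_def B_def by simp
  have "(\<Sum>j<N. \<Sum>k<N. gauss_kernel a (z j - z k)) = (\<integral>\<xi>. G a \<xi> \<partial>lborel)"
    unfolding G_def by (rule gauss_weight_exp_sum_integral(2)[OF a, symmetric])
  also have "\<dots> \<le> (\<integral>\<xi>. 2 * F \<xi> + 2 * (real N)\<^sup>2 * exp (2 * K\<^sup>2) * H \<xi> + (real N)\<^sup>2 * indicator B \<xi>
                      + exp (- K) * G (2 * a) \<xi> \<partial>lborel)"
    using a int_F int_H int_B int_G[of "2 * a"]
    by (intro integral_mono pointwise int_G Bochner_Integration.integrable_add integrable_mult_right) auto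
  also have "\<dots> = 2 * (\<integral>\<xi>. F \<xi> \<partial>lborel) + 2 * (real N)\<^sup>2 * exp (2 * K\<^sup>2) * (\<integral>\<xi>. H \<xi> \<partial>lborel)
      + (real N)\<^sup>2 * measure lborel B + exp (- K) * (\<integral>\<xi>. G (2 * a) \<xi> \<partial>lborel)"
    using a int_F int_H int_B int_G[of "2 * a"]
    by (subst Bochner_Integration.integral_add; (intro Bochner_Integration.integrable_add integrable_mult_right)?;
        simp)+
  finally show ?thesis
    unfolding F_def G_def H_def B_def set_lebesgue_integral_def
    by (simp add: gauss_weight_fourier_integral(2)[OF borel prob a]
        gauss_weight_exp_sum_integral(2)[OF \<open>2 * a > 0\<close>])
qed

lemma exp_minus_Suc_mult_two_power_le: "exp (- (real n + 1)) * 2 ^ n \<le> 1 / 2"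
proof -
  have "(2::real) ^ Suc n \<le> exp 1 ^ Suc n"
    by (intro power_mono) (use exp_ge_add_one_self[of 1] in auto)
  also have "\<dots> = exp (real n + 1)" by (simp add: exp_of_nat_mult[symmetric] exp_add algebra_simps)
  finally have "2 * 2 ^ n \<le> exp (real n + 1)" by simp
  then have "exp (- (real n + 1)) * (2 * 2 ^ n) \<le> exp (- (real n + 1)) * exp (real n + 1)"
    by (rule mult_left_mono) simp
  also have "\<dots> = 1" using exp_minus_inverse[of "real n + 1"] by (simp only: mult.commute)
  finally show ?thesis by simp
qed

lemma gauss_kernel_sum_double_le:
  fixes z :: "nat \<Rightarrow> 'a::euclidean_space"
  assumes a: "a > 0"
  shows "exp (- (real DIM('a) + 1)) * (\<Sum>j<N. \<Sum>k<N. gauss_kernel (2 * a) (z j - z k))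
           \<le> (\<Sum>j<N. \<Sum>k<N. gauss_kernel a (z j - z k)) / 2"
proof -
  let ?L = "\<Sum>j<N. \<Sum>k<N. gauss_kernel a (z j - z k)"
  have "(\<Sum>j<N. \<Sum>k<N. gauss_kernel (2 * a) (z j - z k)) \<le> 2 ^ DIM('a) * ?L"
    unfolding sum_distrib_left by (intro sum_mono gauss_kernel_double_le a)
  then have "exp (- (real DIM('a) + 1)) * (\<Sum>j<N. \<Sum>k<N. gauss_kernel (2 * a) (z j - z k))
      \<le> (exp (- (real DIM('a) + 1)) * 2 ^ DIM('a)) * ?L"
    by (simp add: mult.assoc mult_left_mono)
  also have "\<dots> \<le> 1 / 2 * ?L"
    using a by (intro mult_right_mono exp_minus_Suc_mult_two_power_le sum_nonneg gauss_kernel_nonneg)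
  finally show ?thesis by simp
qed

lemma power_le_gauss_kernel_0:
  assumes "a > 0"
  shows "a ^ DIM('a) \<le> gauss_kernel a (0::'a::euclidean_space)"
proof -
  have "a * 1 \<le> a * sqrt (2*pi)" using assms pi_gt3 by (intro mult_left_mono) auto
  then show ?thesis unfolding gauss_kernel_def using assms by (simp add: power_mono)
qed

lemma annulus_integral_lower_bound:
  fixes \<mu> :: "'a::euclidean_space measure" and z :: "nat \<Rightarrow> 'a" and a \<alpha> c0 :: real
  assumes borel: "sets \<mu> = sets borel" and prob: "prob_space \<mu>" and a: "a > 0"
    and alpha: "0 < \<alpha>" "\<alpha> \<le> real DIM('a)"
    and ball_bound: "\<And>x r. r > 0 \<Longrightarrow> emeasure \<mu> (ball x r) \<le> ennreal (c0 * r powr \<alpha>)"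
    and c0: "c0 > 0"
    and small_ball: "8 * measure lborel (ball (0::'a) 1) * real N \<le> a ^ DIM('a)"
    and small_energy: "16 * exp (2 * (real DIM('a) + 1)\<^sup>2) * c0 * suminf (shell_weight DIM('a)) * real N
                         \<le> a powr \<alpha>"
  shows "real N * a ^ DIM('a) / 8
           \<le> (LINT \<xi>:{\<xi>. 1 \<le> norm \<xi> \<and> norm \<xi> \<le> 2 * (real DIM('a) + 1) * a}|lborel.
                 (cmod (exp_sum z N \<xi> - of_nat N * fourier_measure \<mu> \<xi>))\<^sup>2)"
    (is "_ \<le> ?I")
proof -
  let ?D = "DIM('a)" and ?V = "measure lborel (ball (0::'a) 1)"
  let ?e = "exp (2 * (real DIM('a) + 1)\<^sup>2)" and ?S = "suminf (shell_weight DIM('a))"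
  define L where "L b = (\<Sum>j<N. \<Sum>k<N. gauss_kernel b (z j - z k))" for b
  define E where "E = (\<integral>p. gauss_kernel a (fst p - snd p) \<partial>(\<mu> \<Otimes>\<^sub>M \<mu>))"
  define K0 where "K0 = gauss_kernel a (0::'a)"
  have K0: "a ^ ?D \<le> K0" "0 \<le> K0"
    unfolding K0_def using a by (simp_all add: power_le_gauss_kernel_0 gauss_kernel_nonneg)
  have "L a \<le> 2 * ?I + 2 * (real N)\<^sup>2 * ?e * E + (real N)\<^sup>2 * ?V + exp (- (real ?D + 1)) * L (2 * a)"
    unfolding L_def E_def by (rule gauss_energy_split[OF borel prob a]) simp
  moreover have "exp (- (real ?D + 1)) * L (2 * a) \<le> L a / 2"
    unfolding L_def by (rule gauss_kernel_sum_double_le[OF a])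
  moreover have "real N * K0 \<le> L a"
    unfolding L_def K0_def by (rule gauss_kernel_energy_ge[OF a])
  moreover have "(real N)\<^sup>2 * ?V \<le> real N * K0 / 8"
  proof -
    have "real N * (8 * ?V * real N) \<le> real N * K0"
      using small_ball K0 by (intro mult_left_mono) auto
    then show ?thesis by (simp add: power2_eq_square field_simps)
  qed
  moreover have "2 * (real N)\<^sup>2 * ?e * E \<le> real N * K0 / 8"
  proof -
    define t where "t = c0 / a powr \<alpha> * ?S"
    have "16 * (real N * ?e * t) \<le> 1"
      using small_energy a unfolding t_def by (simp add: field_simps)
    moreover have "E \<le> K0 * t"
      unfolding E_def K0_def t_def by (rule gauss_kernel_energy_le[OF borel prob a alpha ball_bound c0])
    ultimately have "2 * (real N)\<^sup>2 * ?e * E \<le> 2 * (real N)\<^sup>2 * ?e * (K0 * t)"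
      by (intro mult_left_mono) auto
    also have "\<dots> = 2 * (real N * K0) * (real N * ?e * t)"
      by (simp add: power2_eq_square mult_ac)
    also have "\<dots> \<le> 2 * (real N * K0) * (1 / 16)"
      using \<open>16 * (real N * ?e * t) \<le> 1\<close> K0 by (intro mult_left_mono) auto
    finally show ?thesis by (simp add: mult_ac)
  qed
  ultimately have "real N * K0 / 8 \<le> ?I"
    by linarith
  moreover have "real N * a ^ ?D \<le> real N * K0"
    using K0 by (intro mult_left_mono) simp_all
  ultimately show ?thesis by linarith
qed

lemma le_power_if_le_powr:
  fixes a \<alpha> x :: real
  assumes x: "1 \<le> x" and le: "x \<le> a powr \<alpha>" and a: "0 < a" and alpha: "0 < \<alpha>" "\<alpha> \<le> real n"
  shows "x \<le> a ^ n"
proof -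
  have "1 \<le> a"
  proof (rule ccontr)
    assume "\<not> 1 \<le> a"
    then have "a powr \<alpha> < 1 powr \<alpha>"
      using a alpha by (intro powr_less_mono2) auto
    then show False using x le by simp
  qed
  then have "a powr \<alpha> \<le> a powr real n"
    using alpha by (intro powr_mono) auto
  then show ?thesis
    using le a by (simp add: powr_realpow)
qed

lemma le_powr_if_powr_inverse_le:
  fixes x y \<alpha> :: real
  assumes "0 < \<alpha>" "0 \<le> x" "x powr (1 / \<alpha>) \<le> y"
  shows "x \<le> y powr \<alpha>"
proof -
  have "x = (x powr (1 / \<alpha>)) powr \<alpha>"
    using assms by (simp add: powr_powr)
  also have "\<dots> \<le> y powr \<alpha>"
    using assms by (intro powr_mono2) auto
  finally show ?thesis .
qed

lemma annulus_integral_lower_bound_powr: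
  fixes \<mu> :: "'a::euclidean_space measure" and z :: "nat \<Rightarrow> 'a" and a \<alpha> c0 :: real
  assumes borel: "sets \<mu> = sets borel" and prob: "prob_space \<mu>" and a: "a > 0"
    and alpha: "0 < \<alpha>" "\<alpha> \<le> real DIM('a)"
    and ball_bound: "\<And>x r. r > 0 \<Longrightarrow> emeasure \<mu> (ball x r) \<le> ennreal (c0 * r powr \<alpha>)"
    and c0: "c0 > 0" and N: "N > 0"
    and few_points: "max 1 (max (8 * measure lborel (ball (0::'a) 1))
                       (16 * exp (2 * (real DIM('a) + 1)\<^sup>2) * c0 * suminf (shell_weight DIM('a))))
                     * real N \<le> a powr \<alpha>"
  shows "real N * a ^ DIM('a) / 8
           \<le> (LINT \<xi>:{\<xi>. 1 \<le> norm \<xi> \<and> norm \<xi> \<le> 2 * (real DIM('a) + 1) * a}|lborel.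
                 (cmod (exp_sum z N \<xi> - of_nat N * fourier_measure \<mu> \<xi>))\<^sup>2)"
proof -
  define Q where "Q = max 1 (max (8 * measure lborel (ball (0::'a) 1))
                     (16 * exp (2 * (real DIM('a) + 1)\<^sup>2) * c0 * suminf (shell_weight DIM('a))))"
  have "1 \<le> Q * real N"
    using N mult_mono[of 1 Q 1 "real N"] unfolding Q_def by simp
  then have "Q * real N \<le> a ^ DIM('a)"
    using le_power_if_le_powr[OF _ few_points[folded Q_def] a alpha] by blast
  moreover have "8 * measure lborel (ball (0::'a) 1) * real N \<le> Q * real N"
    "16 * exp (2 * (real DIM('a) + 1)\<^sup>2) * c0 * suminf (shell_weight DIM('a)) * real N \<le> Q * real N"
    unfolding Q_def by (intro mult_right_mono; simp)+
  ultimately show ?thesis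
    by (intro annulus_integral_lower_bound[OF borel prob a alpha ball_bound c0])
       (use few_points[folded Q_def] in linarith)+
qed

theorem lemma11:
  fixes \<mu> :: "'a::euclidean_space measure" and \<alpha> c0 :: real
  assumes borel: "sets \<mu> = sets borel"
    and bdd: "bounded (msupport \<mu>)"
    and mass: "emeasure \<mu> (msupport \<mu>) = 1"
    and alpha: "0 < \<alpha>" "\<alpha> \<le> real DIM('a)"
    and c0: "c0 > 0"
    and ball_bound: "\<And>x r. r > 0 \<Longrightarrow> emeasure \<mu> (ball x r) \<le> ennreal (c0 * r powr \<alpha>)"
  shows "\<exists>c1>0. \<exists>c2>0. \<forall>(N::nat) (z::nat \<Rightarrow> 'a) (M::real).
           inj_on z {..<N} \<longrightarrow> M \<ge> c1 * real N powr (1 / \<alpha>) \<longrightarrow>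
           (LINT \<xi>:{\<xi>. 1 \<le> norm \<xi> \<and> norm \<xi> \<le> M}|lborel.
               (cmod ((\<Sum>j<N. cis (- 2 * pi * (\<xi> \<bullet> z j))) - of_nat N * fourier_measure \<mu> \<xi>))\<^sup>2)
           \<ge> c2 * real N * M ^ DIM('a)"
proof -
  let ?D = "DIM('a)"
  have prob: "prob_space \<mu>" by (rule prob_space_if_msupport_mass_1[OF borel mass])
  define Q where "Q = max 1 (max (8 * measure lborel (ball (0::'a) 1))
                     (16 * exp (2 * (real ?D + 1)\<^sup>2) * c0 * suminf (shell_weight ?D)))"
  define c where "c = 1 / (2 * (real ?D + 1))"
  have Q: "Q \<ge> 1" and c: "c > 0" and scale: "\<And>M. 2 * (real ?D + 1) * (c * M) = M"
    unfolding Q_def c_def by auto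
  then have c1: "Q powr (1 / \<alpha>) / c > 0" and c2: "c ^ ?D / 8 > 0" by auto
  show ?thesis
  proof (rule exI, rule conjI[OF c1], rule exI, rule conjI[OF c2], intro allI impI)
    fix N :: nat and z :: "nat \<Rightarrow> 'a" and M :: real
    assume "inj_on z {..<N}" and M: "Q powr (1 / \<alpha>) / c * real N powr (1 / \<alpha>) \<le> M"
    show "c ^ ?D / 8 * real N * M ^ ?D \<le> (LINT \<xi>:{\<xi>. 1 \<le> norm \<xi> \<and> norm \<xi> \<le> M}|lborel.
        (cmod ((\<Sum>j<N. cis (- 2 * pi * (\<xi> \<bullet> z j))) - of_nat N * fourier_measure \<mu> \<xi>))\<^sup>2)"
    proof (cases "N = 0")
      case False
      have "0 < Q powr (1 / \<alpha>) / c * real N powr (1 / \<alpha>)"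
        using Q c False by (intro mult_pos_pos divide_pos_pos) auto
      then have "0 < c * M" using M c by (intro mult_pos_pos) auto
      have "(Q * real N) powr (1 / \<alpha>) \<le> c * M"
        using M c by (simp add: powr_mult field_simps)
      then have "Q * real N \<le> (c * M) powr \<alpha>"
        using alpha Q by (intro le_powr_if_powr_inverse_le) auto
      then have "real N * (c * M) ^ ?D / 8
          \<le> (LINT \<xi>:{\<xi>. 1 \<le> norm \<xi> \<and> norm \<xi> \<le> M}|lborel.
                (cmod (exp_sum z N \<xi> - of_nat N * fourier_measure \<mu> \<xi>))\<^sup>2)"
        using annulus_integral_lower_bound_powr[OF borel prob \<open>0 < c * M\<close> alpha ball_bound c0]
          False unfolding scale Q_def by simp
      then show ?thesis by (simp add: exp_sum_def power_mult_distrib mult_ac)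
    qed simp
  qed
qed

end
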